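(* Let $G=(V,E)$ be a graph with $m\ge 1$ edges. Every biased orientation of $G$ has in-degree distribution $p^\flat$ satisfying $H(p^\flat) \le \mathrm{OPT}(G) + 1$.
   Context: All graphs are finite, undirected and loopless, but multiple edges are allowed. For an orientation $\vec G$ of $G$, the in-degree distribution is $p_v := \rho_{\vec G}(v)/m$, where $\rho_{\vec G}(v)$ is the in-degree of $v$ and $m=|E|$. Entropy: $H(p) := \sum_{v\in V} -p_v\log p_v$, $\log$ base $2$, $-0\log 0:=0$. $\mathrm{OPT}(G)$ denotes the minimum of $H(p)$ over in-degree distributions $p$ of orientations of $G$. An orientation of $G$ is biased if each edge $vw$ with $\deg(v)>\deg(w)$ is oriented toward $v$ (edges between vertices of equal degree may be oriented arbitrarily). *)

theory Defs
  imports Complex_Main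
begin

text \<open>Multiple edges are allowed since
  distinct edge indices may have equal endpoints.\<close>

definition multigraph :: "'a set \<Rightarrow> 'e set \<Rightarrow> ('e \<Rightarrow> 'a) \<Rightarrow> ('e \<Rightarrow> 'a) \<Rightarrow> bool" where
  "multigraph V E s t \<longleftrightarrow> finite V \<and> finite E \<and>
     (\<forall>e\<in>E. s e \<in> V \<and> t e \<in> V \<and> s e \<noteq> t e)"

definition degree :: "'e set \<Rightarrow> ('e \<Rightarrow> 'a) \<Rightarrow> ('e \<Rightarrow> 'a) \<Rightarrow> 'a \<Rightarrow> nat" where
  "degree E s t v = card {e\<in>E. s e = v \<or> t e = v}"

text \<open>An orientation assigns to every edge its head (the endpoint it points to).\<close>
definition orientation :: "'e set \<Rightarrow> ('e \<Rightarrow> 'a) \<Rightarrow> ('e \<Rightarrow> 'a) \<Rightarrow> ('e \<Rightarrow> 'a) \<Rightarrow> bool" where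
  "orientation E s t h \<longleftrightarrow> (\<forall>e\<in>E. h e = s e \<or> h e = t e)"

definition indegree :: "'e set \<Rightarrow> ('e \<Rightarrow> 'a) \<Rightarrow> 'a \<Rightarrow> nat" where
  "indegree E h v = card {e\<in>E. h e = v}"

definition indeg_dist :: "'e set \<Rightarrow> ('e \<Rightarrow> 'a) \<Rightarrow> 'a \<Rightarrow> real" where
  "indeg_dist E h v = real (indegree E h v) / real (card E)"

definition entropy :: "'a set \<Rightarrow> ('a \<Rightarrow> real) \<Rightarrow> real" where
  "entropy V p = (\<Sum>v\<in>V. if p v = 0 then 0 else - p v * log 2 (p v))"

definition OPT :: "'a set \<Rightarrow> 'e set \<Rightarrow> ('e \<Rightarrow> 'a) \<Rightarrow> ('e \<Rightarrow> 'a) \<Rightarrow> real" where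
  "OPT V E s t = Min {entropy V (indeg_dist E h) | h. orientation E s t h}"

definition biased :: "'e set \<Rightarrow> ('e \<Rightarrow> 'a) \<Rightarrow> ('e \<Rightarrow> 'a) \<Rightarrow> ('e \<Rightarrow> 'a) \<Rightarrow> bool" where
  "biased E s t h \<longleftrightarrow> orientation E s t h \<and>
     (\<forall>e\<in>E. (degree E s t (s e) > degree E s t (t e) \<longrightarrow> h e = s e) \<and>
             (degree E s t (t e) > degree E s t (s e) \<longrightarrow> h e = t e))"

end

theory Submission
  imports Defs "HOL-Library.FuncSet"
begin

text \<open>
  Let m = |E| and, for an edge e, let M(e) be the larger of the degrees of its two endpoints.
  Since each vertex receives each edge at most once, H(p) = (1/m) \<Sum>_e -log(\<rho>(head e)/m) for
  any orientation.  The proof compares every orientation with the quantity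
    L = (1/m) \<Sum>_e -log(M(e)/m).
  Lower bound: in any orientation the head of e has in-degree at most its degree, hence at
  most M(e), so H(p) \<ge> L; in particular OPT(G) \<ge> L.
  Upper bound: for a biased orientation the head of e has degree exactly M(e).  By Gibbs'
  inequality against the distribution d(v)/2m (handshake lemma: \<Sum> d(v) = 2m),
  H(p) \<le> (1/m) \<Sum>_v \<rho>(v) (-log(d(v)/2m)) = (1/m) \<Sum>_e -log(M(e)/2m) = L + 1.
  The file first collects general facts (regrouping sums over heads, in-degree versus degree,
  the handshake lemma, Gibbs' inequality, existence of an optimal orientation), then proves
  the two bounds, and finally combines them.
\<close>

lemma sum_over_heads:
  assumes "finite E" "finite V" "\<And>e. e \<in> E \<Longrightarrow> g e \<in> V"
  shows "(\<Sum>v\<in>V. real (indegree E g v) * f v) = (\<Sum>e\<in>E. f (g e))"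
proof -
  have "(\<Sum>e\<in>E. f (g e)) = (\<Sum>v\<in>V. \<Sum>e\<in>{e\<in>E. g e = v}. f (g e))"
    using sum.group[of E V g "\<lambda>e. f (g e)"] assms by (simp add: image_subset_iff)
  also have "\<dots> = (\<Sum>v\<in>V. \<Sum>e\<in>{e\<in>E. g e = v}. f v)"
    by (intro sum.cong refl) auto
  also have "\<dots> = (\<Sum>v\<in>V. real (indegree E g v) * f v)"
    by (simp add: indegree_def)
  finally show ?thesis by simp
qed

lemma entropy_indeg_dist_vertex_sum:
  assumes "card E \<ge> 1"
  shows "entropy V (indeg_dist E g) =
    (\<Sum>v\<in>V. real (indegree E g v) * - log 2 (real (indegree E g v) / real (card E)))
      / real (card E)"
proof -
  have m: "real (card E) > 0" using assms by simp
  have "entropy V (indeg_dist E g) =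
    (\<Sum>v\<in>V. real (indegree E g v) * - log 2 (real (indegree E g v) / real (card E))
      / real (card E))"
    unfolding entropy_def indeg_dist_def using m by (intro sum.cong refl) auto
  then show ?thesis by (simp add: sum_divide_distrib)
qed

lemma entropy_indeg_dist_edge_sum:
  assumes "finite E" "finite V" "\<And>e. e \<in> E \<Longrightarrow> g e \<in> V" "card E \<ge> 1"
  shows "entropy V (indeg_dist E g) =
    (\<Sum>e\<in>E. - log 2 (real (indegree E g (g e)) / real (card E))) / real (card E)"
  using entropy_indeg_dist_vertex_sum[OF assms(4), of V g]
    sum_over_heads[of E V g "\<lambda>v. - log 2 (real (indegree E g v) / real (card E))", OF assms(1-3)]
  by simp

lemma indegree_le_degree:
  assumes "finite E" "orientation E s t g"
  shows "indegree E g v \<le> degree E s t v"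
  unfolding indegree_def degree_def
  using assms by (intro card_mono) (auto simp: orientation_def)

lemma indegree_head_pos:
  assumes "finite E" "e \<in> E"
  shows "indegree E g (g e) > 0"
  unfolding indegree_def using assms by (auto simp: card_gt_0_iff)

lemma sum_degree:
  assumes "multigraph V E s t"
  shows "(\<Sum>v\<in>V. real (degree E s t v)) = 2 * real (card E)"
proof -
  from assms have fin: "finite V" "finite E"
    and sV: "\<And>e. e \<in> E \<Longrightarrow> s e \<in> V" and tV: "\<And>e. e \<in> E \<Longrightarrow> t e \<in> V"
    and loopless: "\<And>e. e \<in> E \<Longrightarrow> s e \<noteq> t e"
    by (auto simp: multigraph_def)
  have split: "real (degree E s t v) = real (indegree E s v) + real (indegree E t v)" for v
  proof -
    have "{e\<in>E. s e = v \<or> t e = v} = {e\<in>E. s e = v} \<union> {e\<in>E. t e = v}" by auto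
    moreover have "card ({e\<in>E. s e = v} \<union> {e\<in>E. t e = v})
        = card {e\<in>E. s e = v} + card {e\<in>E. t e = v}"
      using fin loopless by (intro card_Un_disjoint) force+
    ultimately show ?thesis by (simp add: degree_def indegree_def)
  qed
  show ?thesis
    using sum_over_heads[OF fin(2,1) sV, where f="\<lambda>_. 1"] sum_over_heads[OF fin(2,1) tV, where f="\<lambda>_. 1"]
    by (simp add: split sum.distrib)
qed

lemma log2_le_linear: "(x::real) > 0 \<Longrightarrow> log 2 x \<le> (x - 1) / ln 2"
  unfolding log_def by (intro divide_right_mono ln_le_minus_one) auto

lemma gibbs_inequality:
  fixes c q :: "'a \<Rightarrow> real" and m :: real
  assumes "finite V" "m > 0"
    and c_nonneg: "\<And>v. v \<in> V \<Longrightarrow> c v \<ge> 0"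
    and q_nonneg: "\<And>v. v \<in> V \<Longrightarrow> q v \<ge> 0"
    and q_pos: "\<And>v. v \<in> V \<Longrightarrow> c v > 0 \<Longrightarrow> q v > 0"
    and mass: "(\<Sum>v\<in>V. q v) \<le> (\<Sum>v\<in>V. c v)"
  shows "(\<Sum>v\<in>V. c v * - log 2 (c v / m)) \<le> (\<Sum>v\<in>V. c v * - log 2 (q v / m))"
proof -
  have termwise: "c v * (log 2 (q v / m) - log 2 (c v / m)) \<le> (q v - c v) / ln 2"
    if v: "v \<in> V" for v
  proof (cases "c v = 0")
    case True
    then show ?thesis using q_nonneg[OF v] by simp
  next
    case False
    then have cp: "c v > 0" using c_nonneg[OF v] by simp
    have qp: "q v > 0" using q_pos[OF v cp] .
    have "log 2 (q v / m) = log 2 (c v / m) + log 2 (q v / c v)"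
      using cp qp \<open>m > 0\<close> by (simp add: log_divide)
    then have "c v * (log 2 (q v / m) - log 2 (c v / m)) = c v * log 2 (q v / c v)" by simp
    also have "\<dots> \<le> c v * ((q v / c v - 1) / ln 2)"
      using cp qp by (intro mult_left_mono log2_le_linear) auto
    also have "\<dots> = (q v - c v) / ln 2" using cp by (simp add: field_simps)
    finally show ?thesis .
  qed
  have "(\<Sum>v\<in>V. c v * (log 2 (q v / m) - log 2 (c v / m))) \<le> (\<Sum>v\<in>V. (q v - c v) / ln 2)"
    using termwise by (rule sum_mono)
  also have "\<dots> = ((\<Sum>v\<in>V. q v) - (\<Sum>v\<in>V. c v)) / ln 2"
    by (simp add: sum_divide_distrib[symmetric] sum_subtractf)
  also have "\<dots> \<le> 0" using mass by (simp add: divide_nonpos_pos)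
  finally show ?thesis by (simp add: right_diff_distrib sum_subtractf sum_negf)
qed

text \<open>There are only finitely many orientations up to their values off E, and at least
  one exists, so the minimum defining OPT is attained.\<close>
lemma OPT_attained:
  assumes "multigraph V E s t"
  obtains g where "orientation E s t g" and "OPT V E s t = entropy V (indeg_dist E g)"
proof -
  from assms have fin: "finite V" "finite E"
    and inc: "\<And>e. e \<in> E \<Longrightarrow> s e \<in> V \<and> t e \<in> V"
    by (auto simp: multigraph_def)
  define S where "S = {entropy V (indeg_dist E g) | g. orientation E s t g}"
  have "S \<subseteq> (\<lambda>g. entropy V (indeg_dist E g)) ` (E \<rightarrow>\<^sub>E V)"
  proof
    fix x assume "x \<in> S"
    then obtain g where o: "orientation E s t g" and x: "x = entropy V (indeg_dist E g)"
      unfolding S_def by auto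
    have "indeg_dist E (restrict g E) = indeg_dist E g"
      by (auto simp: indeg_dist_def indegree_def restrict_def intro!: arg_cong[where f=card])
    moreover have "restrict g E \<in> E \<rightarrow>\<^sub>E V" using o inc by (force simp: orientation_def)
    ultimately show "x \<in> (\<lambda>g. entropy V (indeg_dist E g)) ` (E \<rightarrow>\<^sub>E V)"
      using x by (metis image_eqI)
  qed
  then have "finite S" using fin by (meson finite_PiE finite_imageI finite_subset)
  moreover have "orientation E s t s" by (simp add: orientation_def)
  then have "S \<noteq> {}" unfolding S_def by auto
  ultimately have "Min S \<in> S" by simp
  then show ?thesis
    using that unfolding OPT_def S_def[symmetric] by (auto simp: S_def)
qed

definition max_end_degree :: "'e set \<Rightarrow> ('e \<Rightarrow> 'a) \<Rightarrow> ('e \<Rightarrow> 'a) \<Rightarrow> 'e \<Rightarrow> nat" where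
  "max_end_degree E s t e = max (degree E s t (s e)) (degree E s t (t e))"

text \<open>The quantity L = (1/m) \<Sum>_e -log(M(e)/m), squeezed between OPT and the entropy of a
  biased orientation minus one.\<close>
definition edge_entropy_bound :: "'e set \<Rightarrow> ('e \<Rightarrow> 'a) \<Rightarrow> ('e \<Rightarrow> 'a) \<Rightarrow> real" where
  "edge_entropy_bound E s t =
     (\<Sum>e\<in>E. - log 2 (real (max_end_degree E s t e) / real (card E))) / real (card E)"

lemma max_end_degree_pos:
  assumes "finite E" "e \<in> E"
  shows "max_end_degree E s t e > 0"
proof -
  have "degree E s t (s e) > 0"
    using assms unfolding degree_def by (auto simp: card_gt_0_iff)
  then show ?thesis by (simp add: max_end_degree_def)
qed

lemma biased_head_degree:
  assumes "biased E s t h" "e \<in> E"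
  shows "degree E s t (h e) = max_end_degree E s t e"
  using assms unfolding biased_def orientation_def max_end_degree_def
  by (cases "degree E s t (s e) < degree E s t (t e)";
      cases "degree E s t (t e) < degree E s t (s e)") auto

text \<open>Lower bound: every orientation has entropy at least L, since the relative in-degree
  of each edge's head is at most M(e)/m.\<close>
lemma edge_entropy_bound_le_entropy:
  assumes "multigraph V E s t" "card E \<ge> 1" "orientation E s t g"
  shows "edge_entropy_bound E s t \<le> entropy V (indeg_dist E g)"
proof -
  from assms(1) have fin: "finite V" "finite E" by (auto simp: multigraph_def)
  have gV: "\<And>e. e \<in> E \<Longrightarrow> g e \<in> V"
    using assms(1,3) by (force simp: multigraph_def orientation_def)
  define m where "m = real (card E)"
  have m: "m > 0" using assms(2) by (simp add: m_def)
  have "- log 2 (real (max_end_degree E s t e) / m) \<le> - log 2 (real (indegree E g (g e)) / m)"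
    if e: "e \<in> E" for e
  proof -
    have "indegree E g (g e) \<le> degree E s t (g e)"
      using indegree_le_degree[OF fin(2) assms(3)] .
    moreover have "g e = s e \<or> g e = t e" using assms(3) e by (simp add: orientation_def)
    ultimately have "indegree E g (g e) \<le> max_end_degree E s t e"
      unfolding max_end_degree_def by auto
    then show ?thesis
      using indegree_head_pos[OF fin(2) e, of g] m
      by (simp add: divide_right_mono log_mono)
  qed
  then have "(\<Sum>e\<in>E. - log 2 (real (max_end_degree E s t e) / m))
      \<le> (\<Sum>e\<in>E. - log 2 (real (indegree E g (g e)) / m))"
    by (rule sum_mono)
  then show ?thesis
    using entropy_indeg_dist_edge_sum[OF fin(2,1) gV assms(2)] m
    unfolding edge_entropy_bound_def m_def by (simp add: divide_right_mono)
qed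

text \<open>Upper bound: a biased orientation has entropy at most L + 1.  Gibbs' inequality
  against the weights d(v)/2 (total mass m by the handshake lemma) turns the entropy into an
  edge average of -log(M(e)/2m), which is L + 1.\<close>
lemma biased_entropy_le_edge_entropy_bound:
  assumes G: "multigraph V E s t" and m1: "card E \<ge> 1" and bias: "biased E s t h"
  shows "entropy V (indeg_dist E h) \<le> edge_entropy_bound E s t + 1"
proof -
  from G have fin: "finite V" "finite E" by (auto simp: multigraph_def)
  have o: "orientation E s t h" using bias by (simp add: biased_def)
  have hV: "\<And>e. e \<in> E \<Longrightarrow> h e \<in> V"
    using G o by (force simp: multigraph_def orientation_def)
  define m where "m = real (card E)"
  define c where "c v = real (indegree E h v)" for v
  define q where "q v = real (degree E s t v) / 2" for v
  have m: "m > 0" using m1 by (simp add: m_def)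
  have c_le_deg: "c v \<le> real (degree E s t v)" for v
    using indegree_le_degree[OF fin(2) o] by (simp add: c_def)
  have mass: "(\<Sum>v\<in>V. q v) = (\<Sum>v\<in>V. c v)"
    using sum_degree[OF G] sum_over_heads[OF fin(2,1) hV, where f="\<lambda>_. 1"]
    by (simp add: q_def c_def sum_divide_distrib[symmetric])
  have "entropy V (indeg_dist E h) = (\<Sum>v\<in>V. c v * - log 2 (c v / m)) / m"
    unfolding entropy_indeg_dist_vertex_sum[OF m1] by (simp add: c_def m_def)
  also have "\<dots> \<le> (\<Sum>v\<in>V. c v * - log 2 (q v / m)) / m"
  proof (intro divide_right_mono gibbs_inequality)
    fix v assume "c v > 0"
    then show "q v > 0" using c_le_deg[of v] by (simp add: q_def)
  qed (use fin m mass in \<open>auto simp: c_def q_def\<close>)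
  also have "(\<Sum>v\<in>V. c v * - log 2 (q v / m)) = (\<Sum>e\<in>E. - log 2 (q (h e) / m))"
    unfolding c_def by (rule sum_over_heads[OF fin(2,1) hV])
  also have "\<dots> = (\<Sum>e\<in>E. - log 2 (real (max_end_degree E s t e) / m) + 1)"
  proof (intro sum.cong refl)
    fix e assume e: "e \<in> E"
    have "q (h e) / m = (real (max_end_degree E s t e) / m) / 2"
      by (simp add: q_def biased_head_degree[OF bias e])
    then show "- log 2 (q (h e) / m) = - log 2 (real (max_end_degree E s t e) / m) + 1"
      using max_end_degree_pos[OF fin(2) e, of s t] m by (simp add: log_divide log_mult)
  qed
  also have "\<dots> = (\<Sum>e\<in>E. - log 2 (real (max_end_degree E s t e) / m)) + m"
    by (simp only: sum.distrib) (simp add: m_def)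
  finally show ?thesis
    unfolding edge_entropy_bound_def using m by (simp add: m_def add_divide_distrib)
qed

text \<open>A biased orientation is within one bit of the optimum: both its entropy minus one and
  the optimal entropy are separated by the edge bound L.\<close>
theorem theorem2:
  fixes V :: "'a set" and E :: "'e set" and s t h :: "'e \<Rightarrow> 'a"
  assumes "multigraph V E s t"
    and "card E \<ge> 1"
    and "biased E s t h"
  shows "entropy V (indeg_dist E h) \<le> OPT V E s t + 1"
proof -
  obtain g where g: "orientation E s t g" and opt: "OPT V E s t = entropy V (indeg_dist E g)"
    using OPT_attained[OF assms(1)] .
  have "entropy V (indeg_dist E h) \<le> edge_entropy_bound E s t + 1"
    using biased_entropy_le_edge_entropy_bound[OF assms] .
  also have "edge_entropy_bound E s t \<le> OPT V E s t"
    unfolding opt using edge_entropy_bound_le_entropy[OF assms(1,2) g] .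
  finally show ?thesis by simp
qed

end
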